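(* Let $X$ be a real Banach space and let $E\subset X$ be a weakly compact set having no vector of maximum length (no $e\in E$ with $\|e\|=\sup\{\|e'\|:e'\in E\}$). Then the norm-closed convex hull $\overline{\mathrm{co}}(E)$ has no vector of maximum length. In particular, if $X$ fails the Schur property and $(x_n)_{n\ge1}$ is a sequence of unit vectors in $X$ converging weakly to $0$, then $$K=\overline{\mathrm{co}}\left(\left\{\tfrac{n}{n+1}x_n : n\in\mathbb{N}\right\}\cup\{0\}\right)$$ is a closed bounded convex set that is not remotal from $0$.
   Context: $\overline{\mathrm{co}}(E)$ denotes the norm-closed convex hull of $E$. A Banach space has the Schur property if every weakly convergent sequence is norm convergent. For a bounded set $E$ in a Banach space $Z$ and $z\in Z$, let $D(z,E)=\sup\{\|z-e\|: e\in E\}$; $E$ is remotal from $z$ if there exists $e_0\in E$ with $\|z-e_0\|=D(z,E)$. *)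

theory Defs
  imports "HOL-Analysis.Analysis"
begin

definition weak_topology :: "'a::real_normed_vector topology" where
  "weak_topology = topology_generated_by
     {{x. f x \<in> U} | f U. bounded_linear (f :: 'a \<Rightarrow> real) \<and> open U}"

definition weakly_compact :: "'a::real_normed_vector set \<Rightarrow> bool" where
  "weakly_compact E \<longleftrightarrow> compactin weak_topology E"

definition weakly_convergent_to :: "(nat \<Rightarrow> 'a::real_normed_vector) \<Rightarrow> 'a \<Rightarrow> bool" where
  "weakly_convergent_to x l \<longleftrightarrow>
     (\<forall>f :: 'a \<Rightarrow> real. bounded_linear f \<longrightarrow> (\<lambda>n. f (x n)) \<longlonglongrightarrow> f l)"

definition schur_property :: "'a::real_normed_vector itself \<Rightarrow> bool" where
  "schur_property _ \<longleftrightarrow>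
     (\<forall>(x :: nat \<Rightarrow> 'a) l. weakly_convergent_to x l \<longrightarrow> x \<longlonglongrightarrow> l)"

definition has_max_length_vector :: "'a::real_normed_vector set \<Rightarrow> bool" where
  "has_max_length_vector E \<longleftrightarrow> (\<exists>e\<in>E. \<forall>e'\<in>E. norm e' \<le> norm e)"

definition farthest_dist :: "'a::real_normed_vector \<Rightarrow> 'a set \<Rightarrow> real" where
  "farthest_dist z E = (SUP e\<in>E. norm (z - e))"

definition remotal_from :: "'a::real_normed_vector set \<Rightarrow> 'a \<Rightarrow> bool" where
  "remotal_from E z \<longleftrightarrow> (\<exists>e0\<in>E. norm (z - e0) = farthest_dist z E)"

end

theory Submission
  imports Defs
begin

(* Suppose z is a vector of maximum length in closure (convex hull E).
   By Hahn-Banach there is a functional f with f z = norm z and |f x| <= norm x.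
   Since f is weakly continuous and E is weakly compact, f attains its maximum on E
   at some e0, and the closed convex set {x. f x <= f e0} contains
   closure (convex hull E).  Hence norm z = f z <= f e0 <= norm e0, so e0 has maximum
   length in E, a contradiction.

   Finally it treats the example: the points
   (n/(n+1)) x_n together with 0 form a weakly compact set (a weakly convergent
   sequence with its limit) whose norms strictly increase, and for a bounded set,
   being remotal from 0 means having a vector of maximum length. *)

(* Graphs of real linear functionals dominated by the norm: subspaces of pairs
   (x, a) with a <= norm x.  Zorn's lemma is applied to these sets. *)
definition norm_dominated :: "('a::real_normed_vector \<times> real) set \<Rightarrow> bool" where
  "norm_dominated G \<longleftrightarrow> subspace G \<and> (\<forall>(x, a) \<in> G. a \<le> norm x)"

(* A norm-dominated subspace is the graph of a function: the difference of two
   values at the same point is dominated by norm 0 in both directions. *)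
lemma norm_dominated_unique:
  assumes G: "norm_dominated G" and "(x, a) \<in> G" "(x, b) \<in> G"
  shows "a = b"
proof -
  have "(x, a) - (x, b) \<in> G" "(x, b) - (x, a) \<in> G"
    using G assms(2,3) subspace_diff unfolding norm_dominated_def by blast+
  then have "a - b \<le> 0" "b - a \<le> 0"
    using G unfolding norm_dominated_def by fastforce+
  then show ?thesis by simp
qed

(* The one-dimensional Hahn-Banach step: if t lies between the lower and upper
   bounds determined by M, then giving y the value t keeps the graph dominated. *)
lemma norm_dominated_step_bound:
  fixes M :: "('a::real_normed_vector \<times> real) set"
  assumes M: "norm_dominated M"
    and lower: "\<And>x a. (x, a) \<in> M \<Longrightarrow> a - norm (x - y) \<le> t"
    and upper: "\<And>x a. (x, a) \<in> M \<Longrightarrow> t \<le> norm (x + y) - a"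
    and xa: "(x, a) \<in> M"
  shows "a + c * t \<le> norm (x + c *\<^sub>R y)"
proof -
  have scaled: "(d *\<^sub>R x, d * a) \<in> M" for d
    using M xa subspace_scale[of M "(x, a)" d] unfolding norm_dominated_def by simp
  consider "c = 0" | "c > 0" | "c < 0" by linarith
  then show ?thesis
  proof cases
    case 1
    then show ?thesis using M xa unfolding norm_dominated_def by auto
  next
    case 2
    have "t \<le> norm ((1/c) *\<^sub>R x + y) - a / c" using upper[OF scaled[of "1/c"]] by simp
    then have "c * t \<le> c * norm ((1/c) *\<^sub>R x + y) - a"
      using 2 by (simp add: field_simps)
    also have "c * norm ((1/c) *\<^sub>R x + y) = norm (c *\<^sub>R ((1/c) *\<^sub>R x + y))" using 2 by simp
    also have "c *\<^sub>R ((1/c) *\<^sub>R x + y) = x + c *\<^sub>R y" using 2 by (simp add: algebra_simps)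
    finally show ?thesis by simp
  next
    case 3
    have "a / (- c) - norm ((1 / (- c)) *\<^sub>R x - y) \<le> t" using lower[OF scaled[of "1/(-c)"]] by simp
    then have "a - (- c) * norm ((1 / (- c)) *\<^sub>R x - y) \<le> (- c) * t"
      using 3 by (simp add: field_simps)
    moreover have "(- c) * norm ((1 / (- c)) *\<^sub>R x - y) = norm ((- c) *\<^sub>R ((1 / (- c)) *\<^sub>R x - y))"
      using 3 by simp
    moreover have "(- c) *\<^sub>R ((1 / (- c)) *\<^sub>R x - y) = x + c *\<^sub>R y" using 3 by (simp add: algebra_simps)
    ultimately have "a - norm (x + c *\<^sub>R y) \<le> (- c) * t" by metis
    then show ?thesis by simp
  qed
qed

(* A norm-dominated graph that is undefined at y extends properly: choose t as the
   supremum of the lower bounds and take the span of M and (y, t). *)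
lemma norm_dominated_extend:
  fixes M :: "('a::real_normed_vector \<times> real) set"
  assumes M: "norm_dominated M" and y: "\<forall>a. (y, a) \<notin> M"
  shows "\<exists>G. norm_dominated G \<and> M \<subset> G"
proof -
  have "subspace M" and M_le: "\<And>x a. (x, a) \<in> M \<Longrightarrow> a \<le> norm x"
    using M unfolding norm_dominated_def by auto
  define S where "S = {a - norm (x - y) | x a. (x, a) \<in> M}"
  have S_bound: "s \<le> norm (x' + y) - a'" if "s \<in> S" "(x', a') \<in> M" for s x' a'
  proof -
    obtain x a where xa: "(x, a) \<in> M" "s = a - norm (x - y)" using \<open>s \<in> S\<close> S_def by blast
    have "(x, a) + (x', a') \<in> M" using subspace_add[OF \<open>subspace M\<close> xa(1) that(2)] .
    then have "a + a' \<le> norm (x + x')" using M_le by simp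
    also have "\<dots> \<le> norm (x - y) + norm (x' + y)"
      using norm_triangle_ineq[of "x - y" "x' + y"] by simp
    finally show ?thesis using xa(2) by simp
  qed
  have "(0, 0) \<in> M" using subspace_0[OF \<open>subspace M\<close>] by (simp add: zero_prod_def)
  then have "0 - norm (0 - y) \<in> S" unfolding S_def by blast
  then have "S \<noteq> {}" by blast
  have "bdd_above S" using S_bound[OF _ \<open>(0, 0) \<in> M\<close>] by (rule bdd_aboveI)
  define t where "t = Sup S"
  have lower: "a - norm (x - y) \<le> t" if "(x, a) \<in> M" for x a
    unfolding t_def using that \<open>bdd_above S\<close> by (intro cSup_upper) (auto simp: S_def)
  have upper: "t \<le> norm (x + y) - a" if "(x, a) \<in> M" for x a
    unfolding t_def using that \<open>S \<noteq> {}\<close> S_bound by (intro cSup_least) auto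
  define G where "G = span (insert (y, t) M)"
  have "norm_dominated G"
    unfolding norm_dominated_def
  proof (intro conjI ballI)
    show "subspace G" unfolding G_def by simp
    fix p assume "p \<in> G"
    then obtain c where "p - c *\<^sub>R (y, t) \<in> span M"
      unfolding G_def span_breakdown_eq by blast
    then have "p - c *\<^sub>R (y, t) \<in> M" using \<open>subspace M\<close> span_eq_iff by blast
    moreover obtain x a where p: "p = (x, a)" by fastforce
    ultimately have "(x - c *\<^sub>R y, a - c * t) \<in> M" by simp
    from norm_dominated_step_bound[OF M lower upper this, of c]
    show "case p of (x, a) \<Rightarrow> a \<le> norm x" using p by simp
  qed
  moreover have "M \<subseteq> G" "(y, t) \<in> G" unfolding G_def
    by (auto intro: span_base)
  ultimately show ?thesis using y by blast
qed

lemma norm_dominated_Union_chain: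
  assumes "C \<noteq> {}" and dom: "\<And>G. G \<in> C \<Longrightarrow> norm_dominated G"
    and chain: "\<And>G H. G \<in> C \<Longrightarrow> H \<in> C \<Longrightarrow> G \<subseteq> H \<or> H \<subseteq> G"
  shows "norm_dominated (\<Union>C)"
  unfolding norm_dominated_def
proof (intro conjI ballI subspaceI)
  show "0 \<in> \<Union>C" using assms(1) dom subspace_0 unfolding norm_dominated_def by blast
next
  fix p q assume "p \<in> \<Union>C" "q \<in> \<Union>C"
  then obtain G H where "G \<in> C" "H \<in> C" "p \<in> G" "q \<in> H" by blast
  then show "p + q \<in> \<Union>C"
    using chain[of G H] dom subspace_add unfolding norm_dominated_def by blast
next
  fix c p assume "p \<in> \<Union>C"
  then show "c *\<^sub>R p \<in> \<Union>C" using dom subspace_scale unfolding norm_dominated_def by blast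
next
  fix p assume "p \<in> \<Union>C"
  then show "case p of (x, a) \<Rightarrow> a \<le> norm x" using dom unfolding norm_dominated_def by blast
qed

lemma norming_functional:
  fixes z :: "'a::real_normed_vector"
  obtains f where "bounded_linear f" "f z = norm z" "\<And>x. \<bar>f x\<bar> \<le> norm x"
proof -
  let ?A = "{G. norm_dominated G \<and> (z, norm z) \<in> G}"
  have "norm_dominated (span {(z, norm z)})"
    unfolding norm_dominated_def
  proof (intro conjI ballI)
    fix p assume "p \<in> span {(z, norm z)}"
    then obtain k where "p = (k *\<^sub>R z, k * norm z)" by (auto simp: span_singleton)
    moreover have "k * norm z \<le> \<bar>k\<bar> * norm z" by (simp add: mult_right_mono)
    ultimately show "case p of (x, a) \<Rightarrow> a \<le> norm x" by simp
  qed simp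
  then have "span {(z, norm z)} \<in> ?A" by (auto intro: span_base)
  moreover have "\<Union>C \<in> ?A" if "C \<noteq> {}" "subset.chain ?A C" for C
    using that norm_dominated_Union_chain[of C] unfolding subset.chain_def by auto
  ultimately obtain M where "M \<in> ?A" and max: "\<And>G. G \<in> ?A \<Longrightarrow> M \<subseteq> G \<Longrightarrow> G = M"
    using subset_Zorn_nonempty[of ?A] by blast
  then have M: "norm_dominated M" "(z, norm z) \<in> M" by auto
  have "\<exists>a. (x, a) \<in> M" for x
    using norm_dominated_extend[OF M(1), of x] max M(2) by blast
  then obtain f where f: "\<And>x. (x, f x) \<in> M" by metis
  have f_eq: "f x = a" if "(x, a) \<in> M" for x a using norm_dominated_unique[OF M(1) f that] .
  have "subspace M" using M unfolding norm_dominated_def by blast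
  have add: "f (x + y) = f x + f y" for x y
    using f_eq subspace_add[OF \<open>subspace M\<close> f f] by simp
  have scale: "f (c *\<^sub>R x) = c * f x" for c x
    using f_eq subspace_scale[OF \<open>subspace M\<close> f] by simp
  have le: "f x \<le> norm x" for x using M(1) f unfolding norm_dominated_def by fastforce
  have abs: "\<bar>f x\<bar> \<le> norm x" for x
    using le[of x] le[of "- x"] scale[of "-1" x] by simp
  have "bounded_linear f"
    by (rule bounded_linear_intro[where K=1]) (use add scale abs in auto)
  moreover have "f z = norm z" using f_eq M(2) .
  ultimately show ?thesis using abs that by blast
qed

lemma topspace_weak_topology [simp]:
  "topspace (weak_topology :: 'a::real_normed_vector topology) = UNIV"
proof -
  have "(UNIV :: 'a set) \<in> {{x. f x \<in> U} | f U. bounded_linear (f :: 'a \<Rightarrow> real) \<and> open U}"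
    by (rule CollectI, rule exI[of _ "\<lambda>_. 0"], rule exI[of _ UNIV]) auto
  then show ?thesis
    unfolding weak_topology_def topology_generated_by_topspace by blast
qed

lemma continuous_map_weak_topology:
  fixes f :: "'a::real_normed_vector \<Rightarrow> real"
  assumes "bounded_linear f"
  shows "continuous_map weak_topology euclideanreal f"
  unfolding continuous_map_def
proof (intro conjI allI impI)
  fix U :: "real set" assume "openin euclideanreal U"
  then have "{x. f x \<in> U} \<in> {{x. f x \<in> U} | f U. bounded_linear (f :: 'a \<Rightarrow> real) \<and> open U}"
    using assms by auto
  then have "openin weak_topology {x. f x \<in> U}"
    unfolding weak_topology_def by (rule topology_generated_by_Basis)
  then show "openin weak_topology {x \<in> topspace weak_topology. f x \<in> U}" by simp
qed auto

(* Weak convergence of a sequence is convergence in the weak topology; it suffices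
   to check the generating sets {x. f x \<in> V}. *)
lemma limitin_weak_topology:
  fixes y :: "nat \<Rightarrow> 'a::real_normed_vector"
  assumes "weakly_convergent_to y l"
  shows "limitin weak_topology y l sequentially"
  unfolding limitin_def
proof (intro conjI allI impI)
  fix U assume U: "openin weak_topology U \<and> l \<in> U"
  then have "generate_topology_on
      {{x. f x \<in> U} | f U. bounded_linear (f :: 'a \<Rightarrow> real) \<and> open U} U"
    unfolding weak_topology_def openin_topology_generated_by_iff by blast
  from this U[THEN conjunct2] show "eventually (\<lambda>n. y n \<in> U) sequentially"
  proof (induction rule: generate_topology_on.induct)
    case (Int a b)
    then have "eventually (\<lambda>n. y n \<in> a) sequentially" "eventually (\<lambda>n. y n \<in> b) sequentially"
      by simp_all
    then show ?case by (rule eventually_conj[THEN eventually_mono]) simp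
  next
    case (UN K)
    then obtain k where "k \<in> K" "l \<in> k" by blast
    then have "eventually (\<lambda>n. y n \<in> k) sequentially" by (rule UN.IH)
    then show ?case by (rule eventually_mono) (use \<open>k \<in> K\<close> in blast)
  next
    case (Basis s)
    from Basis.hyps have "\<exists>f V. s = {x. f x \<in> V} \<and> bounded_linear (f :: 'a \<Rightarrow> real) \<and> open V"
      by (simp only: mem_Collect_eq)
    then obtain f :: "'a \<Rightarrow> real" and V where s: "s = {x. f x \<in> V}" and "bounded_linear f" "open V"
      by blast
    have "(\<lambda>n. f (y n)) \<longlonglongrightarrow> f l"
      using assms \<open>bounded_linear f\<close> unfolding weakly_convergent_to_def by blast
    moreover have "f l \<in> V" using Basis.prems s by simp
    ultimately have "eventually (\<lambda>n. f (y n) \<in> V) sequentially"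
      using topological_tendstoD \<open>open V\<close> by metis
    then show ?case using s by simp
  qed simp
qed simp

lemma weakly_convergent_scaleR:
  assumes "weakly_convergent_to x l" and "c \<longlonglongrightarrow> a"
  shows "weakly_convergent_to (\<lambda>n. c n *\<^sub>R x n) (a *\<^sub>R l)"
  unfolding weakly_convergent_to_def
proof (intro allI impI)
  fix f :: "'a \<Rightarrow> real" assume f: "bounded_linear f"
  then have "(\<lambda>n. c n * f (x n)) \<longlonglongrightarrow> a * f l"
    using assms tendsto_mult unfolding weakly_convergent_to_def by blast
  then show "(\<lambda>n. f (c n *\<^sub>R x n)) \<longlonglongrightarrow> f (a *\<^sub>R l)"
    using f by (simp add: linear_scale[OF bounded_linear.linear])
qed

lemma weakly_convergent_Suc:
  assumes "weakly_convergent_to x l"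
  shows "weakly_convergent_to (\<lambda>n. x (Suc n)) l"
  using assms LIMSEQ_Suc unfolding weakly_convergent_to_def by blast

lemma weakly_compact_convergent_sequence:
  assumes "weakly_convergent_to y l"
  shows "weakly_compact (insert l (range y))"
  unfolding weakly_compact_def
  by (rule compactin_sequence_with_limit[OF limitin_weak_topology[OF assms]]) auto

lemma functional_max_on_closed_convex_hull:
  fixes E :: "'a::real_normed_vector set" and f :: "'a \<Rightarrow> real"
  assumes "weakly_compact E" "E \<noteq> {}" and f: "bounded_linear f"
  obtains e0 where "e0 \<in> E" "\<And>x. x \<in> closure (convex hull E) \<Longrightarrow> f x \<le> f e0"
proof -
  have "compactin euclideanreal (f ` E)"
    using image_compactin[OF assms(1)[unfolded weakly_compact_def] continuous_map_weak_topology[OF f]] .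
  then have "compact (f ` E)" by simp
  moreover have "f ` E \<noteq> {}" using \<open>E \<noteq> {}\<close> by simp
  ultimately obtain s where "s \<in> f ` E" "\<forall>t\<in>f ` E. t \<le> s"
    using compact_attains_sup by blast
  then obtain e0 where e0: "e0 \<in> E" "\<And>e. e \<in> E \<Longrightarrow> f e \<le> f e0" by auto
  let ?H = "{x. f x \<le> f e0}"
  have "?H = f -` {..f e0}" by auto
  then have "convex ?H"
    using convex_linear_vimage[OF bounded_linear.linear[OF f] convex_real_interval(2)] by simp
  then have "convex hull E \<subseteq> ?H" using e0(2) by (intro hull_minimal subsetI) simp_all
  moreover have "closed ?H"
    using bounded_linear.continuous_on[OF f continuous_on_id]
    by (intro closed_Collect_le continuous_on_const) simp_all
  ultimately have "closure (convex hull E) \<subseteq> ?H" by (rule closure_minimal)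
  then show ?thesis using that e0(1) by blast
qed

lemma weakly_compact_no_max_length_closed_convex_hull:
  fixes E :: "'a::real_normed_vector set"
  assumes wc: "weakly_compact E" and no_max: "\<not> has_max_length_vector E"
  shows "\<not> has_max_length_vector (closure (convex hull E))"
proof
  assume "has_max_length_vector (closure (convex hull E))"
  then obtain z where z: "z \<in> closure (convex hull E)"
    and z_max: "\<And>e. e \<in> closure (convex hull E) \<Longrightarrow> norm e \<le> norm z"
    unfolding has_max_length_vector_def by blast
  obtain f where f: "bounded_linear f" "f z = norm z" "\<And>x. \<bar>f x\<bar> \<le> norm x"
    using norming_functional by blast
  have "E \<noteq> {}" using z by (metis closure_empty convex_hull_empty empty_iff)
  then obtain e0 where e0: "e0 \<in> E" "\<And>x. x \<in> closure (convex hull E) \<Longrightarrow> f x \<le> f e0"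
    using functional_max_on_closed_convex_hull[OF wc _ f(1)] by blast
  have "norm z \<le> norm e0" using e0(2)[OF z] f(2) f(3)[of e0] by linarith
  moreover have "norm e \<le> norm z" if "e \<in> E" for e
    using z_max subsetD[OF subset_trans[OF hull_subset closure_subset] that] .
  ultimately have "\<forall>e\<in>E. norm e \<le> norm e0" by force
  then show False using no_max e0(1) unfolding has_max_length_vector_def by blast
qed

lemma no_max_length_strictly_increasing:
  fixes y :: "nat \<Rightarrow> 'a::real_normed_vector"
  assumes "\<And>n. norm (y n) < norm (y (Suc n))"
  shows "\<not> has_max_length_vector (insert 0 (range y))"
proof
  assume "has_max_length_vector (insert 0 (range y))"
  then obtain e where e: "e \<in> insert 0 (range y)" "\<And>e'. e' \<in> insert 0 (range y) \<Longrightarrow> norm e' \<le> norm e"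
    unfolding has_max_length_vector_def by blast
  from e(1) show False
  proof
    assume "e = 0"
    then show False using e(2)[of "y (Suc 0)"] assms[of 0] by simp
  next
    assume "e \<in> range y"
    then obtain n where "e = y n" by blast
    then show False using e(2)[of "y (Suc n)"] assms[of n] by simp
  qed
qed

lemma remotal_from_zero_imp_max_length:
  fixes K :: "'a::real_normed_vector set"
  assumes "bounded K" and "remotal_from K 0"
  shows "has_max_length_vector K"
proof -
  obtain e0 where e0: "e0 \<in> K" "norm (0 - e0) = farthest_dist 0 K"
    using assms(2) unfolding remotal_from_def by blast
  obtain B where "\<And>e. e \<in> K \<Longrightarrow> norm e \<le> B"
    using assms(1) bounded_iff by blast
  then have "bdd_above ((\<lambda>e. norm (0 - e)) ` K)" by (intro bdd_aboveI2) simp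
  then have "norm (0 - e) \<le> farthest_dist 0 K" if "e \<in> K" for e
    unfolding farthest_dist_def using that by (rule cSUP_upper2) simp
  then have "norm e \<le> norm e0" if "e \<in> K" for e
    using e0(2) that by simp
  then show ?thesis using e0(1) unfolding has_max_length_vector_def by blast
qed

lemma range_from_one: "{g n | n. n \<ge> 1} = range (\<lambda>n. g (Suc n))"
proof (intro equalityI subsetI)
  fix v assume "v \<in> {g n | n. n \<ge> 1}"
  then obtain n where "n \<ge> 1" "v = g n" by blast
  then have "v = g (Suc (n - 1))" by simp
  then show "v \<in> range (\<lambda>n. g (Suc n))" by blast
qed auto

lemma shrunk_unit_sequence:
  fixes x :: "nat \<Rightarrow> 'a::real_normed_vector"
  assumes unit: "\<forall>n\<ge>1. norm (x n) = 1" and weak: "weakly_convergent_to x 0"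
  defines "y \<equiv> \<lambda>n. (real (Suc n) / real (Suc n + 1)) *\<^sub>R x (Suc n)"
  shows "weakly_compact (insert 0 (range y))"
    and "\<not> has_max_length_vector (insert 0 (range y))"
    and "insert 0 (range y) \<subseteq> cball 0 1"
proof -
  have "(\<lambda>n. real (Suc n) / real (Suc n + 1)) \<longlonglongrightarrow> 1"
    using LIMSEQ_Suc[OF LIMSEQ_n_over_Suc_n] by simp
  from weakly_convergent_scaleR[OF weakly_convergent_Suc[OF weak] this]
  have "weakly_convergent_to y 0" unfolding y_def by simp
  then show "weakly_compact (insert 0 (range y))" by (rule weakly_compact_convergent_sequence)
  have norm_y: "norm (y n) = real (Suc n) / real (Suc n + 1)" for n
    using unit unfolding y_def by simp
  have "real (Suc n) / real (Suc n + 1) < real (Suc (Suc n)) / real (Suc (Suc n) + 1)" for n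
    by (simp add: field_simps)
  then show "\<not> has_max_length_vector (insert 0 (range y))"
    by (intro no_max_length_strictly_increasing) (simp add: norm_y)
  show "insert 0 (range y) \<subseteq> cball 0 1" by (auto simp: norm_y)
qed

(* The main theorem.  The failure of the Schur property only guarantees that such a
   sequence exists; the conclusion does not depend on it. *)
theorem mainTheorem3:
  fixes E :: "'a::banach set"
  shows "(weakly_compact E \<and> \<not> has_max_length_vector E
            \<longrightarrow> \<not> has_max_length_vector (closure (convex hull E)))
       \<and> (\<forall>x :: nat \<Rightarrow> 'a.
            \<not> schur_property TYPE('a) \<and> (\<forall>n\<ge>1. norm (x n) = 1) \<and> weakly_convergent_to x 0
            \<longrightarrow> (let K = closure (convex hull
                     ({(real n / real (n + 1)) *\<^sub>R x n | n. n \<ge> 1} \<union> {0}))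
                 in closed K \<and> bounded K \<and> convex K \<and> \<not> remotal_from K 0))"
proof (intro conjI impI allI)
  assume "weakly_compact E \<and> \<not> has_max_length_vector E"
  then show "\<not> has_max_length_vector (closure (convex hull E))"
    using weakly_compact_no_max_length_closed_convex_hull by blast
next
  fix x :: "nat \<Rightarrow> 'a"
  assume x: "\<not> schur_property TYPE('a) \<and> (\<forall>n\<ge>1. norm (x n) = 1) \<and> weakly_convergent_to x 0"
  define y where "y n = (real (Suc n) / real (Suc n + 1)) *\<^sub>R x (Suc n)" for n
  define K where "K = closure (convex hull (insert 0 (range y)))"
  have F: "{(real n / real (n + 1)) *\<^sub>R x n | n. n \<ge> 1} \<union> {0} = insert 0 (range y)"
    using range_from_one[of "\<lambda>n. (real n / real (n + 1)) *\<^sub>R x n"] unfolding y_def by simp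
  have "K \<subseteq> cball 0 1"
    unfolding K_def using shrunk_unit_sequence(3)[of x] x
    by (intro closure_minimal hull_minimal convex_cball closed_cball) (simp_all add: y_def)
  then have "bounded K" using bounded_cball bounded_subset by blast
  moreover have "\<not> has_max_length_vector K"
    unfolding K_def y_def using shrunk_unit_sequence(1,2)[of x] x
    by (intro weakly_compact_no_max_length_closed_convex_hull) simp_all
  ultimately have "closed K \<and> bounded K \<and> convex K \<and> \<not> remotal_from K 0"
    unfolding K_def using remotal_from_zero_imp_max_length convex_closure by auto
  then show "let K = closure (convex hull
                     ({(real n / real (n + 1)) *\<^sub>R x n | n. n \<ge> 1} \<union> {0}))
                 in closed K \<and> bounded K \<and> convex K \<and> \<not> remotal_from K 0"
    unfolding F K_def Let_def .
qed

end
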